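(* Let $\Sigma=(I,X,\mathcal U,\phi,Y,h)$ be a forward complete control system with outputs. If $\Sigma$ is OUAG and BORS, then $\Sigma$ is OUGB.
   Context: Let $I\in\{\mathbb N_0,\mathbb R_0^+\}$. A forward complete control system with outputs $\Sigma=(I,X,\mathcal U,\phi,Y,h)$ consists of: a normed space $(X,\|\cdot\|_X)$; a vector space $U$ and a normed linear subspace $(\mathcal U,\|\cdot\|_{\mathcal U})$ of $\{u:I\to U\}$ such that for all $u\in\mathcal U,\tau\in I$, $u(\cdot+\tau)\in\mathcal U$ with $\|u(\cdot+\tau)\|_{\mathcal U}\le\|u\|_{\mathcal U}$, and for $t_2\ge t_1\ge 0$ the function $u|_{[t_1,t_2]}$ ($u$ on $[t_1,t_2]$, $0$ elsewhere) lies in $\mathcal U$ with norm $\le\|u\|_{\mathcal U}$; a map $\phi:I\times X\times\mathcal U\to X$ with $\phi(0,x,u)=x$, causality, and cocycle property $\phi(t+s,x,u)=\phi(s,\phi(t,x,u),u(t+\cdot))$; a normed space $Y$ and $h:X\times U\to Y$. Write $y(t,x,u)=h(\phi(t,x,u),u(t))$, $B_r=\{x:\|x\|_X<r\}$, $B_{r,\mathcal U}=\{u:\|u\|_{\mathcal U}<r\}$; $\mathcal K_\infty$ = unbounded continuous strictly increasing functions $\mathbb R_0^+\to\mathbb R_0^+$ vanishing at $0$. OUAG: $\exists\gamma\in\mathcal K_\infty$ such that for all $\varepsilon,r,s>0$ there is $\tau\in I$ with $\|y(t,x,u)\|_Y\le\varepsilon+\gamma(\|u\|_{\mathcal U})$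 for all $x\in B_r,u\in B_{s,\mathcal U},t\ge\tau$. BORS: for all $C>0,\tau\in I$: $\sup\{\|y(t,x,u)\|_Y:\|x\|_X<C,\|u\|_{\mathcal U}<C,t\in I,t<\tau\}<\infty$. OUGB: $\exists\sigma,\gamma\in\mathcal K_\infty,c>0$ with $\|y(t,x,u)\|_Y\le\sigma(\|x\|_X)+\gamma(\|u\|_{\mathcal U})+c$ for all $x\in X,u\in\mathcal U,t\in I$. *)

theory Defs
  imports "HOL-Analysis.Analysis"
begin

definition time_domain :: "real set \<Rightarrow> bool" where
  "time_domain T \<longleftrightarrow> T = range real \<or> T = {0..}"

definition Kinf :: "(real \<Rightarrow> real) \<Rightarrow> bool" where
  "Kinf f \<longleftrightarrow> continuous_on {0..} f \<and> strict_mono_on {0..} f \<and> f 0 = 0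
      \<and> (\<forall>M. \<exists>r\<ge>0. f r > M)"

text \<open>Inputs are functions I \<rightarrow> U, represented as functions on the reals that vanish off I.\<close>
definition shift_in :: "real set \<Rightarrow> real \<Rightarrow> (real \<Rightarrow> 'u::zero) \<Rightarrow> real \<Rightarrow> 'u" where
  "shift_in T \<tau> u = (\<lambda>t. if t \<in> T then u (t + \<tau>) else 0)"

definition restr_in :: "real set \<Rightarrow> real \<Rightarrow> real \<Rightarrow> (real \<Rightarrow> 'u::zero) \<Rightarrow> real \<Rightarrow> 'u" where
  "restr_in T t1 t2 u = (\<lambda>t. if t \<in> T \<and> t1 \<le> t \<and> t \<le> t2 then u t else 0)"

definition input_space ::
  "real set \<Rightarrow> (real \<Rightarrow> 'u::real_vector) set \<Rightarrow> ((real \<Rightarrow> 'u) \<Rightarrow> real) \<Rightarrow> bool" where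
  "input_space T UU nU \<longleftrightarrow>
     (\<forall>u\<in>UU. \<forall>t. t \<notin> T \<longrightarrow> u t = 0) \<and>
     (\<lambda>_. 0) \<in> UU \<and>
     (\<forall>u\<in>UU. \<forall>v\<in>UU. (\<lambda>t. u t + v t) \<in> UU) \<and>
     (\<forall>u\<in>UU. \<forall>a::real. (\<lambda>t. a *\<^sub>R u t) \<in> UU) \<and>
     (\<forall>u\<in>UU. nU u \<ge> 0) \<and>
     (\<forall>u\<in>UU. nU u = 0 \<longleftrightarrow> u = (\<lambda>_. 0)) \<and>
     (\<forall>u\<in>UU. \<forall>a::real. nU (\<lambda>t. a *\<^sub>R u t) = \<bar>a\<bar> * nU u) \<and>
     (\<forall>u\<in>UU. \<forall>v\<in>UU. nU (\<lambda>t. u t + v t) \<le> nU u + nU v) \<and>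
     (\<forall>u\<in>UU. \<forall>\<tau>\<in>T. shift_in T \<tau> u \<in> UU \<and> nU (shift_in T \<tau> u) \<le> nU u) \<and>
     (\<forall>u\<in>UU. \<forall>t1\<in>T. \<forall>t2\<in>T. t1 \<le> t2 \<longrightarrow>
         restr_in T t1 t2 u \<in> UU \<and> nU (restr_in T t1 t2 u) \<le> nU u)"

text \<open>Forward complete control system with outputs; X is the whole normed type 'x,
  Y the whole normed type 'y.\<close>
definition fc_system ::
  "real set \<Rightarrow> (real \<Rightarrow> 'u::real_vector) set \<Rightarrow> ((real \<Rightarrow> 'u) \<Rightarrow> real)
   \<Rightarrow> (real \<Rightarrow> 'x::real_normed_vector \<Rightarrow> (real \<Rightarrow> 'u) \<Rightarrow> 'x)
   \<Rightarrow> ('x \<Rightarrow> 'u \<Rightarrow> 'y::real_normed_vector) \<Rightarrow> bool" where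
  "fc_system T UU nU \<phi> h \<longleftrightarrow>
     time_domain T \<and> input_space T UU nU \<and>
     (\<forall>x. \<forall>u\<in>UU. \<phi> 0 x u = x) \<and>
     (\<forall>t\<in>T. \<forall>x. \<forall>u\<in>UU. \<forall>v\<in>UU.
        (\<forall>s\<in>T. s \<le> t \<longrightarrow> u s = v s) \<longrightarrow> \<phi> t x u = \<phi> t x v) \<and>
     (\<forall>t\<in>T. \<forall>s\<in>T. \<forall>x. \<forall>u\<in>UU. \<phi> (t + s) x u = \<phi> s (\<phi> t x u) (shift_in T t u))"

definition out :: "(real \<Rightarrow> 'x \<Rightarrow> (real \<Rightarrow> 'u) \<Rightarrow> 'x) \<Rightarrow> ('x \<Rightarrow> 'u \<Rightarrow> 'y)
   \<Rightarrow> real \<Rightarrow> 'x \<Rightarrow> (real \<Rightarrow> 'u) \<Rightarrow> 'y" where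
  "out \<phi> h t x u = h (\<phi> t x u) (u t)"

definition OUAG ::
  "real set \<Rightarrow> (real \<Rightarrow> 'u::real_vector) set \<Rightarrow> ((real \<Rightarrow> 'u) \<Rightarrow> real)
   \<Rightarrow> (real \<Rightarrow> 'x::real_normed_vector \<Rightarrow> (real \<Rightarrow> 'u) \<Rightarrow> 'x)
   \<Rightarrow> ('x \<Rightarrow> 'u \<Rightarrow> 'y::real_normed_vector) \<Rightarrow> bool" where
  "OUAG T UU nU \<phi> h \<longleftrightarrow>
     (\<exists>\<gamma>. Kinf \<gamma> \<and> (\<forall>\<epsilon>>0. \<forall>r>0. \<forall>s>0. \<exists>\<tau>\<in>T.
        \<forall>x u t. norm x < r \<longrightarrow> u \<in> UU \<longrightarrow> nU u < s \<longrightarrow> t \<in> T \<longrightarrow> t \<ge> \<tau> \<longrightarrow>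
          norm (out \<phi> h t x u) \<le> \<epsilon> + \<gamma> (nU u)))"

definition BORS ::
  "real set \<Rightarrow> (real \<Rightarrow> 'u::real_vector) set \<Rightarrow> ((real \<Rightarrow> 'u) \<Rightarrow> real)
   \<Rightarrow> (real \<Rightarrow> 'x::real_normed_vector \<Rightarrow> (real \<Rightarrow> 'u) \<Rightarrow> 'x)
   \<Rightarrow> ('x \<Rightarrow> 'u \<Rightarrow> 'y::real_normed_vector) \<Rightarrow> bool" where
  "BORS T UU nU \<phi> h \<longleftrightarrow>
     (\<forall>C>0. \<forall>\<tau>\<in>T. bdd_above
        {norm (out \<phi> h t x u) | t x u. norm x < C \<and> u \<in> UU \<and> nU u < C \<and> t \<in> T \<and> t < \<tau>})"

definition OUGB ::
  "real set \<Rightarrow> (real \<Rightarrow> 'u::real_vector) set \<Rightarrow> ((real \<Rightarrow> 'u) \<Rightarrow> real)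
   \<Rightarrow> (real \<Rightarrow> 'x::real_normed_vector \<Rightarrow> (real \<Rightarrow> 'u) \<Rightarrow> 'x)
   \<Rightarrow> ('x \<Rightarrow> 'u \<Rightarrow> 'y::real_normed_vector) \<Rightarrow> bool" where
  "OUGB T UU nU \<phi> h \<longleftrightarrow>
     (\<exists>\<sigma> \<gamma> c. Kinf \<sigma> \<and> Kinf \<gamma> \<and> c > 0 \<and>
        (\<forall>x. \<forall>u\<in>UU. \<forall>t\<in>T. norm (out \<phi> h t x u) \<le> \<sigma> (norm x) + \<gamma> (nU u) + c))"

end

theory Submission
  imports Defs
begin

text \<open>Fix an OUAG gain \<gamma>. For states and inputs of norm below r, OUAG with \<epsilon> = 1 bounds
  the output by 1 + \<gamma>(\<parallel>u\<parallel>) from some time \<tau> on, and BORS bounds it before \<tau>; so the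
  output is at most B r + \<gamma>(\<parallel>u\<parallel>). Every sequence B n is dominated by \<alpha>(n) + c for a
  K\<infinity> function \<alpha>, and \<alpha>(max a b) \<le> \<alpha> a + \<alpha> b turns this into the global bound
  \<alpha>(\<parallel>x\<parallel>) + (\<alpha> + \<gamma>)(\<parallel>u\<parallel>) + c.\<close>

lemma Kinf_nonneg: "Kinf f \<Longrightarrow> 0 \<le> s \<Longrightarrow> 0 \<le> f s"
  unfolding Kinf_def strict_mono_on_def
  by (metis atLeast_iff less_eq_real_def order_refl)

lemma Kinf_max_le_add:
  assumes "Kinf f" "0 \<le> a" "0 \<le> b"
  shows "f (max a b) \<le> f a + f b"
  using Kinf_nonneg[OF assms(1,2)] Kinf_nonneg[OF assms(1,3)] by (simp add: max_def)

lemma Kinf_add: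
  assumes f: "Kinf f" and g: "Kinf g"
  shows "Kinf (\<lambda>s. f s + g s)"
proof -
  have "continuous_on {0..} (\<lambda>s. f s + g s)"
    using f g unfolding Kinf_def by (blast intro: continuous_on_add)
  moreover have "strict_mono_on {0..} (\<lambda>s. f s + g s)"
  proof (rule strict_mono_onI)
    fix a b :: real assume "a \<in> {0..}" "b \<in> {0..}" "a < b"
    moreover have "strict_mono_on {0..} f" "strict_mono_on {0..} g"
      using f g unfolding Kinf_def by simp_all
    ultimately show "f a + g a < f b + g b"
      by (intro add_strict_mono) (simp_all add: strict_mono_onD)
  qed
  moreover have "\<exists>r\<ge>0. f r + g r > M" for M
  proof -
    obtain r where "r \<ge> 0" "f r > M" using f unfolding Kinf_def by blast
    then show ?thesis using Kinf_nonneg[OF g \<open>r \<ge> 0\<close>] by (intro exI[of _ r]) simp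
  qed
  ultimately show ?thesis using f g unfolding Kinf_def by simp
qed

definition ramp :: "real \<Rightarrow> real" where
  "ramp x = min 1 (max 0 x)"

text \<open>The piecewise linear function with slope 1 + N k on [k, k + 1]. Terms with k > a
  vanish, so the range of summation may be enlarged at will (\<open>ramp_sum_eq\<close>).\<close>
definition ramp_sum :: "(nat \<Rightarrow> real) \<Rightarrow> real \<Rightarrow> real" where
  "ramp_sum N a = a + (\<Sum>k<nat \<lfloor>a\<rfloor> + 1. N k * ramp (a - real k))"

lemma ramp_sum_eq:
  assumes "nat \<lfloor>a\<rfloor> + 1 \<le> m"
  shows "ramp_sum N a = a + (\<Sum>k<m. N k * ramp (a - real k))"
proof -
  have "(\<Sum>k<m. N k * ramp (a - real k)) = (\<Sum>k<nat \<lfloor>a\<rfloor> + 1. N k * ramp (a - real k))"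
  proof (rule sum.mono_neutral_right)
    show "\<forall>k\<in>{..<m} - {..<nat \<lfloor>a\<rfloor> + 1}. N k * ramp (a - real k) = 0"
    proof
      fix k assume "k \<in> {..<m} - {..<nat \<lfloor>a\<rfloor> + 1}"
      then have "a < real k" by auto linarith
      then show "N k * ramp (a - real k) = 0" by (simp add: ramp_def)
    qed
  qed (use assms in auto)
  then show ?thesis by (simp add: ramp_sum_def)
qed

lemma isCont_ramp_sum: "isCont (ramp_sum N) a"
proof -
  let ?m = "nat \<lfloor>a\<rfloor> + 2"
  have "\<forall>\<^sub>F b in nhds a. b \<in> ball a 1" by (intro eventually_nhds_in_open) auto
  then have eq: "\<forall>\<^sub>F b in nhds a. ramp_sum N b = b + (\<Sum>k<?m. N k * ramp (b - real k))"
  proof (rule eventually_mono)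
    fix b assume "b \<in> ball a 1"
    then have "nat \<lfloor>b\<rfloor> + 1 \<le> ?m" by (auto simp: dist_real_def) linarith
    then show "ramp_sum N b = b + (\<Sum>k<?m. N k * ramp (b - real k))" by (rule ramp_sum_eq)
  qed
  have "isCont (\<lambda>b. b + (\<Sum>k<?m. N k * ramp (b - real k))) a"
    unfolding ramp_def by (intro continuous_intros)
  then show ?thesis using isCont_cong[OF eq] by simp
qed

lemma strict_mono_ramp_sum:
  assumes N: "\<And>k. 0 \<le> N k"
  shows "strict_mono (ramp_sum N)"
proof (rule strict_monoI)
  fix a b :: real assume "a < b"
  let ?m = "nat \<lfloor>b\<rfloor> + 1"
  have "ramp_sum N a = a + (\<Sum>k<?m. N k * ramp (a - real k))"
    using \<open>a < b\<close> by (intro ramp_sum_eq) linarith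
  also have "\<dots> < b + (\<Sum>k<?m. N k * ramp (b - real k))"
    using \<open>a < b\<close> by (intro add_less_le_mono sum_mono mult_left_mono N) (auto simp: ramp_def)
  also have "\<dots> = ramp_sum N b" by (simp add: ramp_sum_def)
  finally show "ramp_sum N a < ramp_sum N b" .
qed

lemma ramp_sum_ge_coeff:
  assumes N: "\<And>k. 0 \<le> N k" and a: "real k + 1 \<le> a"
  shows "N k \<le> ramp_sum N a"
proof -
  have "N k = N k * ramp (a - real k)" using a by (simp add: ramp_def)
  also have "\<dots> \<le> (\<Sum>j<nat \<lfloor>a\<rfloor> + 1. N j * ramp (a - real j))"
    using a by (intro member_le_sum mult_nonneg_nonneg N) (auto simp: ramp_def, linarith)
  also have "\<dots> \<le> ramp_sum N a" using a by (simp add: ramp_sum_def)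
  finally show ?thesis .
qed

lemma Kinf_ramp_sum:
  assumes N: "\<And>k. 0 \<le> N k"
  shows "Kinf (ramp_sum N)"
proof -
  have "continuous_on {0..} (ramp_sum N)"
    by (intro continuous_at_imp_continuous_on ballI isCont_ramp_sum)
  moreover have "strict_mono_on {0..} (ramp_sum N)"
    using strict_mono_ramp_sum[OF N] by (rule monotone_on_subset) simp
  moreover have "ramp_sum N 0 = 0"
    by (simp add: ramp_sum_def ramp_def)
  moreover have "\<exists>r\<ge>0. ramp_sum N r > M" for M
  proof -
    have "r \<le> ramp_sum N r" for r
      using N by (simp add: ramp_sum_def ramp_def sum_nonneg)
    from this[of "max 0 (M + 1)"] show ?thesis by (intro exI[of _ "max 0 (M + 1)"]) simp
  qed
  ultimately show ?thesis unfolding Kinf_def by blast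
qed

lemma sequence_dominated_by_Kinf:
  fixes M :: "nat \<Rightarrow> real"
  obtains \<alpha> c where "Kinf \<alpha>" "c > 0" "\<And>n a. real n \<le> a \<Longrightarrow> M n \<le> \<alpha> a + c"
proof
  define N where "N k = \<bar>M (Suc k)\<bar>" for k
  have N: "0 \<le> N k" for k by (simp add: N_def)
  show \<alpha>: "Kinf (ramp_sum N)" using N by (rule Kinf_ramp_sum)
  show "\<bar>M 0\<bar> + 1 > 0" by simp
  fix n a assume "real n \<le> a"
  show "M n \<le> ramp_sum N a + (\<bar>M 0\<bar> + 1)"
  proof (cases n)
    case 0
    then show ?thesis
      using Kinf_nonneg[OF \<alpha>, of a] \<open>real n \<le> a\<close> by simp
  next
    case (Suc k)
    then have "M n \<le> N k" by (simp add: N_def)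
    also have "\<dots> \<le> ramp_sum N a"
      using \<open>real n \<le> a\<close> Suc by (intro ramp_sum_ge_coeff N) simp
    finally show ?thesis by simp
  qed
qed

definition OUAG_gain ::
  "real set \<Rightarrow> (real \<Rightarrow> 'u::real_vector) set \<Rightarrow> ((real \<Rightarrow> 'u) \<Rightarrow> real)
   \<Rightarrow> (real \<Rightarrow> 'x::real_normed_vector \<Rightarrow> (real \<Rightarrow> 'u) \<Rightarrow> 'x)
   \<Rightarrow> ('x \<Rightarrow> 'u \<Rightarrow> 'y::real_normed_vector) \<Rightarrow> (real \<Rightarrow> real) \<Rightarrow> bool" where
  "OUAG_gain T UU nU \<phi> h \<gamma> \<longleftrightarrow>
     (\<forall>\<epsilon>>0. \<forall>r>0. \<forall>s>0. \<exists>\<tau>\<in>T.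
        \<forall>x u t. norm x < r \<longrightarrow> u \<in> UU \<longrightarrow> nU u < s \<longrightarrow> t \<in> T \<longrightarrow> t \<ge> \<tau> \<longrightarrow>
          norm (out \<phi> h t x u) \<le> \<epsilon> + \<gamma> (nU u))"

lemma OUAG_iff_OUAG_gain: "OUAG T UU nU \<phi> h \<longleftrightarrow> (\<exists>\<gamma>. Kinf \<gamma> \<and> OUAG_gain T UU nU \<phi> h \<gamma>)"
  unfolding OUAG_def OUAG_gain_def ..

definition output_bounded_on_balls ::
  "real set \<Rightarrow> (real \<Rightarrow> 'u::real_vector) set \<Rightarrow> ((real \<Rightarrow> 'u) \<Rightarrow> real)
   \<Rightarrow> (real \<Rightarrow> 'x::real_normed_vector \<Rightarrow> (real \<Rightarrow> 'u) \<Rightarrow> 'x)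
   \<Rightarrow> ('x \<Rightarrow> 'u \<Rightarrow> 'y::real_normed_vector) \<Rightarrow> (real \<Rightarrow> real) \<Rightarrow> bool" where
  "output_bounded_on_balls T UU nU \<phi> h \<gamma> \<longleftrightarrow>
     (\<forall>r. \<exists>B. \<forall>x. \<forall>u\<in>UU. \<forall>t\<in>T. norm x < r \<longrightarrow> nU u < r \<longrightarrow>
        norm (out \<phi> h t x u) \<le> B + \<gamma> (nU u))"

lemma fc_system_input_norm_nonneg: "fc_system T UU nU \<phi> h \<Longrightarrow> u \<in> UU \<Longrightarrow> 0 \<le> nU u"
  unfolding fc_system_def input_space_def by simp

lemma output_bounded_on_balls_if_OUAG_gain_BORS:
  assumes gain: "OUAG_gain T UU nU \<phi> h \<gamma>" and bors: "BORS T UU nU \<phi> h"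
    and \<gamma>: "Kinf \<gamma>" and nU: "\<And>u. u \<in> UU \<Longrightarrow> 0 \<le> nU u"
  shows "output_bounded_on_balls T UU nU \<phi> h \<gamma>"
  unfolding output_bounded_on_balls_def
proof
  fix r :: real
  define C where "C = max r 1"
  have "C > 0" by (simp add: C_def)
  then obtain \<tau> where "\<tau> \<in> T" and late: "\<And>x u t. norm x < C \<Longrightarrow> u \<in> UU \<Longrightarrow> nU u < C
      \<Longrightarrow> t \<in> T \<Longrightarrow> t \<ge> \<tau> \<Longrightarrow> norm (out \<phi> h t x u) \<le> 1 + \<gamma> (nU u)"
    using gain unfolding OUAG_gain_def by (meson zero_less_one)
  obtain B where early: "\<And>x u t. norm x < C \<Longrightarrow> u \<in> UU \<Longrightarrow> nU u < C
      \<Longrightarrow> t \<in> T \<Longrightarrow> t < \<tau> \<Longrightarrow> norm (out \<phi> h t x u) \<le> B"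
    using bors \<open>C > 0\<close> \<open>\<tau> \<in> T\<close> unfolding BORS_def bdd_above_def by blast
  have "norm (out \<phi> h t x u) \<le> max B 1 + \<gamma> (nU u)"
    if "u \<in> UU" "t \<in> T" "norm x < r" "nU u < r" for x u t
  proof (cases "t < \<tau>")
    case True
    then show ?thesis
      using early[of x u t] that Kinf_nonneg[OF \<gamma> nU] by (fastforce simp: C_def)
  next
    case False
    then show ?thesis using late[of x u t] that by (fastforce simp: C_def)
  qed
  then show "\<exists>B. \<forall>x. \<forall>u\<in>UU. \<forall>t\<in>T. norm x < r \<longrightarrow> nU u < r \<longrightarrow>
      norm (out \<phi> h t x u) \<le> B + \<gamma> (nU u)" by blast
qed

lemma OUGB_if_output_bounded_on_balls:
  assumes bounded: "output_bounded_on_balls T UU nU \<phi> h \<gamma>"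
    and \<gamma>: "Kinf \<gamma>" and nU: "\<And>u. u \<in> UU \<Longrightarrow> 0 \<le> nU u"
  shows "OUGB T UU nU \<phi> h"
proof -
  have "\<exists>B. \<forall>n x. \<forall>u\<in>UU. \<forall>t\<in>T. norm x < real n + 1 \<longrightarrow> nU u < real n + 1 \<longrightarrow>
      norm (out \<phi> h t x u) \<le> B n + \<gamma> (nU u)"
    using bounded unfolding output_bounded_on_balls_def by (intro choice allI) blast
  then obtain B where B: "\<And>n x u t. u \<in> UU \<Longrightarrow> t \<in> T \<Longrightarrow> norm x < real n + 1
      \<Longrightarrow> nU u < real n + 1 \<Longrightarrow> norm (out \<phi> h t x u) \<le> B n + \<gamma> (nU u)"
    by blast
  obtain \<alpha> c where \<alpha>: "Kinf \<alpha>" and "c > 0" and dom: "\<And>n a. real n \<le> a \<Longrightarrow> B n \<le> \<alpha> a + c"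
    using sequence_dominated_by_Kinf[of B] by blast
  have "norm (out \<phi> h t x u) \<le> \<alpha> (norm x) + (\<alpha> (nU u) + \<gamma> (nU u)) + c"
    if u: "u \<in> UU" and t: "t \<in> T" for x u t
  proof -
    define m where "m = max (norm x) (nU u)"
    have "0 \<le> m" using nU[OF u] by (simp add: m_def le_max_iff_disj)
    have "norm (out \<phi> h t x u) \<le> B (nat \<lfloor>m\<rfloor>) + \<gamma> (nU u)"
      using u t by (intro B) (auto simp: m_def, linarith+)
    also have "B (nat \<lfloor>m\<rfloor>) \<le> \<alpha> m + c"
      using \<open>0 \<le> m\<close> by (intro dom) linarith
    also have "\<alpha> m \<le> \<alpha> (norm x) + \<alpha> (nU u)"
      unfolding m_def using \<alpha> nU[OF u] by (intro Kinf_max_le_add) auto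
    finally show ?thesis by simp
  qed
  then show ?thesis unfolding OUGB_def using \<alpha> Kinf_add[OF \<alpha> \<gamma>] \<open>c > 0\<close> by blast
qed

theorem lemma7:
  fixes T :: "real set" and UU :: "(real \<Rightarrow> 'u::real_vector) set"
    and nU :: "(real \<Rightarrow> 'u) \<Rightarrow> real"
    and \<phi> :: "real \<Rightarrow> 'x::real_normed_vector \<Rightarrow> (real \<Rightarrow> 'u) \<Rightarrow> 'x"
    and h :: "'x \<Rightarrow> 'u \<Rightarrow> 'y::real_normed_vector"
  assumes "fc_system T UU nU \<phi> h"
    and "OUAG T UU nU \<phi> h"
    and "BORS T UU nU \<phi> h"
  shows "OUGB T UU nU \<phi> h"
proof -
  have nU: "\<And>u. u \<in> UU \<Longrightarrow> 0 \<le> nU u"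
    using assms(1) by (rule fc_system_input_norm_nonneg)
  obtain \<gamma> where \<gamma>: "Kinf \<gamma>" and gain: "OUAG_gain T UU nU \<phi> h \<gamma>"
    using assms(2) unfolding OUAG_iff_OUAG_gain by blast
  have "output_bounded_on_balls T UU nU \<phi> h \<gamma>"
    using gain assms(3) \<gamma> nU by (rule output_bounded_on_balls_if_OUAG_gain_BORS)
  then show ?thesis using \<gamma> nU by (rule OUGB_if_output_bounded_on_balls)
qed

end
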